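(* Let $f\colon\prod_{i\in[n]}X_i\to Y$ satisfy condition (BC), and let $\varphi_k\colon X_k\to Y$ ($k\in[n]$) be maps satisfying the boundary condition. The following are equivalent: (i) $\Phi_k^-\le\varphi_k\le\Phi_k^+$ (pointwise) for all $k\in[n]$; (ii) $f(\mathbf{x})=p_0(\varphi_1(x_1),\ldots,\varphi_n(x_n))$ for all $\mathbf{x}$, where $p_0(y_1,\ldots,y_n)=\bigvee_{I\subseteq[n]}\big(f(\widehat{\mathbf{1}}_I)\wedge\bigwedge_{i\in I}y_i\big)$; (iii) there exists a polynomial function $p\colon Y^n\to Y$ such that $f(\mathbf{x})=p(\varphi_1(x_1),\ldots,\varphi_n(x_n))$ for all $\mathbf{x}$.
   Context: $Y$ is a finite distributive lattice identified with a sublattice of $\mathcal{P}(U)$ for a finite set $U$, with least element $0=\emptyset$, greatest element $1=U$, and $\wedge,\vee$ being intersection and union; $\overline{S}=U\setminus S$. For $S\subseteq U$, $\operatorname{cl}(S)=\bigwedge\{y\in Y: y\ge S\}$, $\operatorname{int}(S)=\bigvee\{y\in Y: y\le S\}$. $[n]=\{1,\ldots,n\}$; $X_1,\ldots,X_n$ are arbitrary sets with at least two elements, each with two fixed distinct elements $0_{X_k},1_{X_k}$ (written $0,1$). For $\mathbf{x}\in\prod_i X_i$ and $a\in X_k$, $\mathbf{x}_k^a$ is $\mathbf{x}$ with $k$-th component replaced by $a$. For $I\subseteq[n]$, $\widehat{\mathbf{1}}_I$ is the tuple whose $i$-th component is $1_{X_i}$ if $i\in I$ and $0_{X_i}$ otherwise;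 an empty meet equals $1$. A map $\varphi_k\colon X_k\to Y$ satisfies the boundary condition if $\varphi_k(0_{X_k})\le\varphi_k(x_k)\le\varphi_k(1_{X_k})$ for all $x_k$. A polynomial function $Y^n\to Y$ is a composition of $\wedge,\vee$ with variables and constants. Condition (BC): $f(\mathbf{x}_k^0)\le f(\mathbf{x})\le f(\mathbf{x}_k^1)$ for all $k\in[n]$ and all $\mathbf{x}$. For $k\in[n]$, $a_k\in X_k$: $$\Phi_k^-(a_k)=\bigvee_{\mathbf{x}:\,x_k=a_k}\operatorname{cl}\big(f(\mathbf{x})\wedge\overline{f(\mathbf{x}_k^0)}\big),\qquad \Phi_k^+(a_k)=\bigwedge_{\mathbf{x}:\,x_k=a_k}\operatorname{int}\big(f(\mathbf{x})\vee\overline{f(\mathbf{x}_k^1)}\big),$$ ranging over all $\mathbf{x}$ with $k$-th component $a_k$. *)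

theory Defs
  imports "HOL-Library.FuncSet"
begin

text \<open>Y is a finite distributive lattice of subsets of the finite set U, containing
  the empty set and U and closed under intersection and union.\<close>
definition set_lattice :: "'u set \<Rightarrow> 'u set set \<Rightarrow> bool" where
  "set_lattice U Y \<longleftrightarrow> finite U \<and> Y \<subseteq> Pow U \<and> {} \<in> Y \<and> U \<in> Y \<and>
     (\<forall>a\<in>Y. \<forall>b\<in>Y. a \<inter> b \<in> Y \<and> a \<union> b \<in> Y)"

definition cl :: "'u set set \<Rightarrow> 'u set \<Rightarrow> 'u set" where
  "cl Y S = \<Inter> {y \<in> Y. S \<subseteq> y}"

definition int :: "'u set set \<Rightarrow> 'u set \<Rightarrow> 'u set" where
  "int Y S = \<Union> {y \<in> Y. y \<subseteq> S}"

inductive_set polyfun :: "'u set set \<Rightarrow> nat \<Rightarrow> ((nat \<Rightarrow> 'u set) \<Rightarrow> 'u set) set"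
  for Y :: "'u set set" and n :: nat where
  var: "i \<in> {1..n} \<Longrightarrow> (\<lambda>y. y i) \<in> polyfun Y n"
| const: "c \<in> Y \<Longrightarrow> (\<lambda>y. c) \<in> polyfun Y n"
| meet: "p \<in> polyfun Y n \<Longrightarrow> q \<in> polyfun Y n \<Longrightarrow> (\<lambda>y. p y \<inter> q y) \<in> polyfun Y n"
| join: "p \<in> polyfun Y n \<Longrightarrow> q \<in> polyfun Y n \<Longrightarrow> (\<lambda>y. p y \<union> q y) \<in> polyfun Y n"

definition hat1 :: "nat \<Rightarrow> (nat \<Rightarrow> 'x) \<Rightarrow> (nat \<Rightarrow> 'x) \<Rightarrow> nat set \<Rightarrow> (nat \<Rightarrow> 'x)" where
  "hat1 n zero one I = restrict (\<lambda>i. if i \<in> I then one i else zero i) {1..n}"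

definition BC :: "nat \<Rightarrow> (nat \<Rightarrow> 'x set) \<Rightarrow> (nat \<Rightarrow> 'x) \<Rightarrow> (nat \<Rightarrow> 'x)
    \<Rightarrow> ((nat \<Rightarrow> 'x) \<Rightarrow> 'u set) \<Rightarrow> bool" where
  "BC n X zero one f \<longleftrightarrow> (\<forall>k\<in>{1..n}. \<forall>x\<in>PiE {1..n} X.
      f (x(k := zero k)) \<subseteq> f x \<and> f x \<subseteq> f (x(k := one k)))"

definition Phi_minus :: "'u set \<Rightarrow> 'u set set \<Rightarrow> nat \<Rightarrow> (nat \<Rightarrow> 'x set) \<Rightarrow> (nat \<Rightarrow> 'x)
    \<Rightarrow> ((nat \<Rightarrow> 'x) \<Rightarrow> 'u set) \<Rightarrow> nat \<Rightarrow> 'x \<Rightarrow> 'u set" where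
  "Phi_minus U Y n X zero f k a =
     \<Union> {cl Y (f x \<inter> (U - f (x(k := zero k)))) | x. x \<in> PiE {1..n} X \<and> x k = a}"

definition Phi_plus :: "'u set \<Rightarrow> 'u set set \<Rightarrow> nat \<Rightarrow> (nat \<Rightarrow> 'x set) \<Rightarrow> (nat \<Rightarrow> 'x)
    \<Rightarrow> ((nat \<Rightarrow> 'x) \<Rightarrow> 'u set) \<Rightarrow> nat \<Rightarrow> 'x \<Rightarrow> 'u set" where
  "Phi_plus U Y n X one f k a =
     U \<inter> \<Inter> {int Y (f x \<union> (U - f (x(k := one k)))) | x. x \<in> PiE {1..n} X \<and> x k = a}"

definition p0 :: "'u set \<Rightarrow> nat \<Rightarrow> (nat \<Rightarrow> 'x) \<Rightarrow> (nat \<Rightarrow> 'x)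
    \<Rightarrow> ((nat \<Rightarrow> 'x) \<Rightarrow> 'u set) \<Rightarrow> (nat \<Rightarrow> 'u set) \<Rightarrow> 'u set" where
  "p0 U n zero one f y = (\<Union>I\<in>Pow {1..n}. f (hat1 n zero one I) \<inter> (U \<inter> (\<Inter>i\<in>I. y i)))"

end

theory Submission
  imports Defs
begin

(* All operations of Y are set operations, so every assertion can be
   checked one point u of U at a time.  For a tuple x and a point u let the support
   S_u(x) be the set of indices i with u in phi_i(x_i).  The three conditions of the
   theorem are linked through two pointwise properties of f:
     local:   flipping coordinate k of x to 1 (if u in phi_k(x_k)) or to 0 (otherwise)
              does not change whether u lies in f(x);
     support: u lies in f(x) iff u lies in f(1_{S_u(x)}).
   Condition (i) is equivalent to "local" (the bounds Phi^-, Phi^+ are characterised by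
   the sets they are generated from); "local" and "support" are equivalent (flip the
   coordinates one at a time, resp. flipping does not change the support); "support"
   is (ii) (monotonicity of I |-> f(1_I) evaluates the join defining p0); p0 is a
   polynomial, giving (ii) => (iii); and a polynomial only sees the support, giving
   (iii) => "support". *)

section \<open>Polynomial functions\<close>

lemma polyfun_pointwise_cong:
  assumes "p \<in> polyfun Y n" and "\<forall>i\<in>{1..n}. u \<in> y i \<longleftrightarrow> u \<in> z i"
  shows "u \<in> p y \<longleftrightarrow> u \<in> p z"
  using assms by (induction p rule: polyfun.induct) auto

lemma polyfun_Union:
  assumes "finite A" and "\<forall>a\<in>A. g a \<in> polyfun Y n" and "{} \<in> Y"
  shows "(\<lambda>y. \<Union>a\<in>A. g a y) \<in> polyfun Y n"
  using assms
proof (induction A rule: finite_induct)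
  case empty
  then show ?case using polyfun.const[of "{}" Y n] by simp
next
  case (insert a A)
  then show ?case using polyfun.join[of "g a" Y n "\<lambda>y. \<Union>b\<in>A. g b y"] by simp
qed

lemma polyfun_Inter_vars:
  assumes "finite I" and "I \<subseteq> {1..n}" and "U \<in> Y"
  shows "(\<lambda>y. U \<inter> (\<Inter>i\<in>I. y i)) \<in> polyfun Y n"
  using assms
proof (induction I rule: finite_induct)
  case empty
  then show ?case using polyfun.const[of U Y n] by simp
next
  case (insert i I)
  have "(\<lambda>y. U \<inter> (\<Inter>j\<in>insert i I. y j)) = (\<lambda>y. y i \<inter> (U \<inter> (\<Inter>j\<in>I. y j)))"
    by auto
  then show ?case
    using insert polyfun.meet[OF polyfun.var[of i n Y], of "\<lambda>y. U \<inter> (\<Inter>j\<in>I. y j)"]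
    by simp
qed

lemma p0_polyfun:
  assumes Y: "set_lattice U Y" and coeffs: "\<forall>I\<subseteq>{1..n}. f (hat1 n zero one I) \<in> Y"
  shows "p0 U n zero one f \<in> polyfun Y n"
proof -
  have "U \<in> Y" "{} \<in> Y" using Y unfolding set_lattice_def by auto
  have "(\<lambda>y. f (hat1 n zero one I) \<inter> (U \<inter> (\<Inter>i\<in>I. y i))) \<in> polyfun Y n"
    if "I \<subseteq> {1..n}" for I
    using that coeffs finite_subset[OF that]
      polyfun.meet[OF polyfun.const polyfun_Inter_vars[OF _ _ \<open>U \<in> Y\<close>]] by blast
  then have "(\<lambda>y. \<Union>I\<in>Pow {1..n}. f (hat1 n zero one I) \<inter> (U \<inter> (\<Inter>i\<in>I. y i)))
      \<in> polyfun Y n"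
    by (intro polyfun_Union \<open>{} \<in> Y\<close>) auto
  then show ?thesis by (simp add: p0_def[abs_def])
qed

lemma hat1_apply: "i \<in> {1..n} \<Longrightarrow> hat1 n zero one I i = (if i \<in> I then one i else zero i)"
  unfolding hat1_def by simp

lemma hat1_PiE:
  "\<forall>i\<in>{1..n}. zero i \<in> X i \<and> one i \<in> X i \<Longrightarrow> hat1 n zero one I \<in> PiE {1..n} X"
  unfolding hat1_def by (auto simp: PiE_iff)

lemma hat1_insert:
  "k \<in> {1..n} \<Longrightarrow> hat1 n zero one (insert k I) = (hat1 n zero one I)(k := one k)"
  unfolding hat1_def by (auto simp: fun_eq_iff)

lemma BC_lower: "BC n X zero one f \<Longrightarrow> x \<in> PiE {1..n} X \<Longrightarrow> k \<in> {1..n} \<Longrightarrow>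
    f (x(k := zero k)) \<subseteq> f x"
  unfolding BC_def by blast

lemma BC_upper: "BC n X zero one f \<Longrightarrow> x \<in> PiE {1..n} X \<Longrightarrow> k \<in> {1..n} \<Longrightarrow>
    f x \<subseteq> f (x(k := one k))"
  unfolding BC_def by blast

text \<open>Condition (BC) makes \<open>I \<mapsto> f(1\<^sub>I)\<close> monotone: raise one coordinate at a time.\<close>
lemma BC_hat1_mono:
  assumes f_BC: "BC n X zero one f" and X: "\<forall>i\<in>{1..n}. zero i \<in> X i \<and> one i \<in> X i"
    and "I \<subseteq> J" and "J \<subseteq> {1..n}"
  shows "f (hat1 n zero one I) \<subseteq> f (hat1 n zero one J)"
proof -
  have "f (hat1 n zero one I) \<subseteq> f (hat1 n zero one (K \<union> I))"
    if "finite K" "K \<subseteq> {1..n}" for K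
    using that
  proof (induction K rule: finite_induct)
    case (insert k K)
    have k: "k \<in> {1..n}" and K: "K \<subseteq> {1..n}" using insert.prems by auto
    have "f (hat1 n zero one (K \<union> I)) \<subseteq> f ((hat1 n zero one (K \<union> I))(k := one k))"
      by (rule BC_upper[OF f_BC hat1_PiE[OF X] k])
    also have "(hat1 n zero one (K \<union> I))(k := one k) = hat1 n zero one (insert k K \<union> I)"
      using hat1_insert[OF k, of zero one "K \<union> I"] by simp
    finally show ?case using insert.IH[OF K] by (rule order_trans[rotated])
  qed simp
  moreover have "finite (J - I)" "J - I \<subseteq> {1..n}" "(J - I) \<union> I = J"
    using assms(3,4) finite_subset[of "J - I" "{1..n}"] by auto
  ultimately show ?thesis by metis
qed

definition support :: "nat \<Rightarrow> (nat \<Rightarrow> 'u set) \<Rightarrow> 'u \<Rightarrow> nat set" where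
  "support n y u = {i \<in> {1..n}. u \<in> y i}"

lemma support_eq_iff:
  "support n y u = support n z u \<longleftrightarrow> (\<forall>i\<in>{1..n}. u \<in> y i \<longleftrightarrow> u \<in> z i)"
  unfolding support_def by blast

text \<open>When \<open>I \<mapsto> f(1\<^sub>I)\<close> is monotone, the join defining \<open>p0\<close> is attained at the
  support: u lies in \<open>p0(y)\<close> iff it lies in \<open>f(1\<^sub>S)\<close> for S the support of y at u.\<close>
lemma p0_mem_iff_support:
  assumes mono: "\<And>I J. I \<subseteq> J \<Longrightarrow> J \<subseteq> {1..n} \<Longrightarrow>
      f (hat1 n zero one I) \<subseteq> f (hat1 n zero one J)"
  shows "u \<in> p0 U n zero one f y \<longleftrightarrow> u \<in> U \<and> u \<in> f (hat1 n zero one (support n y u))"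
proof -
  have "u \<in> p0 U n zero one f y \<longleftrightarrow>
      u \<in> U \<and> (\<exists>I\<subseteq>support n y u. u \<in> f (hat1 n zero one I))"
    unfolding p0_def support_def by blast
  also have "\<dots> \<longleftrightarrow> u \<in> U \<and> u \<in> f (hat1 n zero one (support n y u))"
    using mono[of _ "support n y u"] unfolding support_def by blast
  finally show ?thesis .
qed

section \<open>The bounds \<open>\<Phi>\<^sup>-\<close> and \<open>\<Phi>\<^sup>+\<close>\<close>

lemma cl_le_iff: "y \<in> Y \<Longrightarrow> cl Y S \<subseteq> y \<longleftrightarrow> S \<subseteq> y"
  unfolding cl_def by blast

lemma le_int_iff: "y \<in> Y \<Longrightarrow> y \<subseteq> int Y S \<longleftrightarrow> y \<subseteq> S"
  unfolding int_def by blast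

lemma Phi_minus_le_iff:
  assumes "y \<in> Y"
  shows "Phi_minus U Y n X zero f k a \<subseteq> y \<longleftrightarrow>
    (\<forall>x\<in>PiE {1..n} X. x k = a \<longrightarrow> f x \<inter> (U - f (x(k := zero k))) \<subseteq> y)"
proof -
  have "Phi_minus U Y n X zero f k a \<subseteq> y \<longleftrightarrow>
      (\<forall>x\<in>PiE {1..n} X. x k = a \<longrightarrow> cl Y (f x \<inter> (U - f (x(k := zero k)))) \<subseteq> y)"
    unfolding Phi_minus_def Sup_le_iff by blast
  then show ?thesis by (simp only: cl_le_iff[OF assms])
qed

lemma le_Phi_plus_iff:
  assumes "y \<in> Y" and "y \<subseteq> U"
  shows "y \<subseteq> Phi_plus U Y n X one f k a \<longleftrightarrow>
    (\<forall>x\<in>PiE {1..n} X. x k = a \<longrightarrow> y \<subseteq> f x \<union> (U - f (x(k := one k))))"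
proof -
  have "y \<subseteq> Phi_plus U Y n X one f k a \<longleftrightarrow>
      (\<forall>x\<in>PiE {1..n} X. x k = a \<longrightarrow> y \<subseteq> int Y (f x \<union> (U - f (x(k := one k)))))"
    unfolding Phi_plus_def Int_subset_iff le_Inf_iff using assms(2) by blast
  then show ?thesis by (simp only: le_int_iff[OF assms(1)])
qed

section \<open>The setting of the theorem\<close>

locale representation_setting =
  fixes U :: "'u set" and Y :: "'u set set" and n :: nat
    and X :: "nat \<Rightarrow> 'x set" and zero one :: "nat \<Rightarrow> 'x"
    and f :: "(nat \<Rightarrow> 'x) \<Rightarrow> 'u set" and \<phi> :: "nat \<Rightarrow> 'x \<Rightarrow> 'u set"
  assumes Y: "set_lattice U Y"
    and X: "\<forall>i\<in>{1..n}. zero i \<in> X i \<and> one i \<in> X i"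
    and f_into: "\<forall>x\<in>PiE {1..n} X. f x \<in> Y"
    and f_BC: "BC n X zero one f"
    and phi_into: "\<forall>k\<in>{1..n}. \<forall>a\<in>X k. \<phi> k a \<in> Y"
    and phi_bc: "\<forall>k\<in>{1..n}. \<forall>a\<in>X k. \<phi> k (zero k) \<subseteq> \<phi> k a \<and> \<phi> k a \<subseteq> \<phi> k (one k)"
begin

abbreviation P :: "(nat \<Rightarrow> 'x) set" where
  "P \<equiv> PiE {1..n} X"

abbreviation phis :: "(nat \<Rightarrow> 'x) \<Rightarrow> nat \<Rightarrow> 'u set" where
  "phis x \<equiv> \<lambda>i. \<phi> i (x i)"

definition flip :: "(nat \<Rightarrow> 'x) \<Rightarrow> 'u \<Rightarrow> nat \<Rightarrow> 'x" where
  "flip x u k = (if u \<in> \<phi> k (x k) then one k else zero k)"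

definition flip_invariant :: "nat \<Rightarrow> (nat \<Rightarrow> 'x) \<Rightarrow> bool" where
  "flip_invariant k x \<longleftrightarrow> (\<forall>u\<in>U. u \<in> f x \<longleftrightarrow> u \<in> f (x(k := flip x u k)))"

definition locally_determined :: bool where
  "locally_determined \<longleftrightarrow> (\<forall>k\<in>{1..n}. \<forall>x\<in>P. flip_invariant k x)"

definition support_determined :: bool where
  "support_determined \<longleftrightarrow>
     (\<forall>x\<in>P. \<forall>u\<in>U. u \<in> f x \<longleftrightarrow> u \<in> f (hat1 n zero one (support n (phis x) u)))"

lemma f_subset_U: "x \<in> P \<Longrightarrow> f x \<subseteq> U"
  using Y f_into unfolding set_lattice_def by blast

lemma phi_subset_U: "k \<in> {1..n} \<Longrightarrow> a \<in> X k \<Longrightarrow> \<phi> k a \<subseteq> U"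
  using Y phi_into unfolding set_lattice_def by blast

lemma upd_in_P: "x \<in> P \<Longrightarrow> k \<in> {1..n} \<Longrightarrow> a \<in> X k \<Longrightarrow> x(k := a) \<in> P"
  using PiE_fun_upd[of a X k x "{1..n}"] by (simp add: insert_absorb)

lemma flip_in_X: "k \<in> {1..n} \<Longrightarrow> flip x u k \<in> X k"
  using X unfolding flip_def by simp

text \<open>By the boundary condition on \<open>\<phi>\<^sub>k\<close>, flipping coordinate k does not change
  whether \<open>\<phi>\<^sub>k\<close> contains u ...\<close>
lemma mem_phi_flip:
  assumes "k \<in> {1..n}" and "x k \<in> X k"
  shows "u \<in> \<phi> k (flip x u k) \<longleftrightarrow> u \<in> \<phi> k (x k)"
proof -
  have "\<phi> k (zero k) \<subseteq> \<phi> k (x k) \<and> \<phi> k (x k) \<subseteq> \<phi> k (one k)"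
    by (rule phi_bc[rule_format, OF assms])
  then show ?thesis unfolding flip_def by auto
qed

lemma support_flip:
  assumes "x \<in> P" and "k \<in> {1..n}"
  shows "support n (phis (x(k := flip x u k))) u = support n (phis x) u"
  using mem_phi_flip[where x=x and u=u, OF assms(2) PiE_mem[OF assms]] unfolding support_def by auto

lemma hat1_support:
  "i \<in> {1..n} \<Longrightarrow> hat1 n zero one (support n (phis x) u) i = flip x u i"
  unfolding support_def flip_def by (simp add: hat1_apply)

lemma support_hat1:
  assumes "x \<in> P"
  shows "support n (phis (hat1 n zero one (support n (phis x) u))) u = support n (phis x) u"
  using hat1_support mem_phi_flip[where x=x and u=u] PiE_mem[OF assms] unfolding support_def by auto

text \<open>In this setting \<open>I \<mapsto> f(1\<^sub>I)\<close> is monotone, so \<open>p0\<close> is evaluated at the support.\<close>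
lemma p0_mem: "u \<in> p0 U n zero one f y \<longleftrightarrow> u \<in> U \<and> u \<in> f (hat1 n zero one (support n y u))"
  by (rule p0_mem_iff_support) (rule BC_hat1_mono[OF f_BC X])

text \<open>At a single tuple x and coordinate k, the two inclusions generating the bounds
  (i) say that u cannot leave f(x) when coordinate k is lowered to 0 with u outside
  \<open>\<phi>\<^sub>k(x\<^sub>k)\<close>, nor enter it when k is raised to 1 with u inside; (BC) gives the
  other directions.\<close>
lemma generators_iff_flip_invariant:
  assumes x: "x \<in> P" and k: "k \<in> {1..n}" and a: "x k = a"
  shows "(f x \<inter> (U - f (x(k := zero k))) \<subseteq> \<phi> k a \<and> \<phi> k a \<subseteq> f x \<union> (U - f (x(k := one k))))
     \<longleftrightarrow> flip_invariant k x"
proof -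
  have "f (x(k := zero k)) \<subseteq> f x" "f x \<subseteq> f (x(k := one k))" "\<phi> k a \<subseteq> U"
    using BC_lower[OF f_BC x k] BC_upper[OF f_BC x k] phi_subset_U[OF k PiE_mem[OF x k]] a
    by auto
  then show ?thesis unfolding flip_invariant_def flip_def a by auto
qed

lemma bounds_iff_locally_determined:
  "(\<forall>k\<in>{1..n}. \<forall>a\<in>X k.
      Phi_minus U Y n X zero f k a \<subseteq> \<phi> k a \<and> \<phi> k a \<subseteq> Phi_plus U Y n X one f k a)
   \<longleftrightarrow> locally_determined"
proof -
  have bounds_at: "(Phi_minus U Y n X zero f k a \<subseteq> \<phi> k a \<and> \<phi> k a \<subseteq> Phi_plus U Y n X one f k a)
      \<longleftrightarrow> (\<forall>x\<in>P. x k = a \<longrightarrow> flip_invariant k x)"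
    if k: "k \<in> {1..n}" and a: "a \<in> X k" for k a
    unfolding Phi_minus_le_iff[OF phi_into[rule_format, OF k a]]
      le_Phi_plus_iff[OF phi_into[rule_format, OF k a] phi_subset_U[OF k a]]
    using generators_iff_flip_invariant[OF _ k] by blast
  have "(\<forall>k\<in>{1..n}. \<forall>a\<in>X k. \<forall>x\<in>P. x k = a \<longrightarrow> flip_invariant k x) \<longleftrightarrow> locally_determined"
    unfolding locally_determined_def by (auto dest: PiE_mem)
  with bounds_at show ?thesis by simp
qed

text \<open>Local condition implies support condition: flip the coordinates in a finite
  set K one by one, each step keeping membership of u.\<close>
lemma locally_imp_support_determined:
  assumes local: locally_determined
  shows support_determined
  unfolding support_determined_def
proof (intro ballI)
  fix x u assume x: "x \<in> P" and u: "u \<in> U"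
  define flips where "flips K = (\<lambda>i. if i \<in> K then flip x u i else x i)" for K
  have flips_keep: "flips K \<in> P \<and> (u \<in> f (flips K) \<longleftrightarrow> u \<in> f x)"
    if "finite K" "K \<subseteq> {1..n}" for K
    using that
  proof (induction K rule: finite_induct)
    case (insert k K)
    have k: "k \<in> {1..n}" and K: "K \<subseteq> {1..n}" using insert.prems by auto
    note IH = insert.IH[OF K]
    have flips_insert: "flips (insert k K) = (flips K)(k := flip (flips K) u k)"
      using insert.hyps unfolding flips_def flip_def by (auto simp: fun_eq_iff)
    have "(flips K)(k := flip (flips K) u k) \<in> P"
      using upd_in_P[OF conjunct1[OF IH] k flip_in_X[OF k]] .
    moreover have "flip_invariant k (flips K)"
      using local conjunct1[OF IH] k unfolding locally_determined_def by blast
    ultimately show ?case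
      unfolding flips_insert flip_invariant_def using conjunct2[OF IH] u by blast
  qed (use x in \<open>simp add: flips_def\<close>)
  have "flips {1..n} = hat1 n zero one (support n (phis x) u)"
  proof
    fix i show "flips {1..n} i = hat1 n zero one (support n (phis x) u) i"
    proof (cases "i \<in> {1..n}")
      case True
      then show ?thesis by (simp add: flips_def hat1_support)
    next
      case False
      then show ?thesis
        by (simp only: flips_def hat1_def restrict_def False if_False PiE_arb[OF x False])
    qed
  qed
  then show "u \<in> f x \<longleftrightarrow> u \<in> f (hat1 n zero one (support n (phis x) u))"
    using flips_keep[of "{1..n}"] by simp
qed

lemma support_determinedD:
  "support_determined \<Longrightarrow> x \<in> P \<Longrightarrow> u \<in> U \<Longrightarrow>
    u \<in> f x \<longleftrightarrow> u \<in> f (hat1 n zero one (support n (phis x) u))"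
  unfolding support_determined_def by blast

text \<open>Support condition implies local condition, since flipping keeps the support.\<close>
lemma support_imp_locally_determined:
  assumes support: support_determined
  shows locally_determined
  unfolding locally_determined_def flip_invariant_def
proof (intro ballI)
  fix k x u assume k: "k \<in> {1..n}" and x: "x \<in> P" and u: "u \<in> U"
  have "x(k := flip x u k) \<in> P" using upd_in_P[OF x k flip_in_X[OF k]] .
  then show "u \<in> f x \<longleftrightarrow> u \<in> f (x(k := flip x u k))"
    using support_determinedD[OF support _ u] x support_flip[OF x k] by simp
qed

lemma support_determined_iff_p0:
  "support_determined \<longleftrightarrow> (\<forall>x\<in>P. f x = p0 U n zero one f (phis x))"
proof
  assume support: support_determined
  show "\<forall>x\<in>P. f x = p0 U n zero one f (phis x)"
  proof (intro ballI set_eqI)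
    fix x u assume x: "x \<in> P"
    show "u \<in> f x \<longleftrightarrow> u \<in> p0 U n zero one f (phis x)"
      unfolding p0_mem using support_determinedD[OF support x] f_subset_U[OF x] by blast
  qed
next
  assume rep: "\<forall>x\<in>P. f x = p0 U n zero one f (phis x)"
  show support_determined
    unfolding support_determined_def
  proof (intro ballI)
    fix x u assume "x \<in> P" "u \<in> U"
    then show "u \<in> f x \<longleftrightarrow> u \<in> f (hat1 n zero one (support n (phis x) u))"
      using rep by (simp add: p0_mem)
  qed
qed

text \<open>A polynomial representation forces the support condition, because the
  tuples x and \<open>1\<^sub>S\<close> (S the support of x at u) have the same support.\<close>
lemma polyfun_imp_support_determined:
  assumes p: "p \<in> polyfun Y n" and rep: "\<forall>x\<in>P. f x = p (phis x)"
  shows support_determined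
  unfolding support_determined_def
proof (intro ballI)
  fix x u assume x: "x \<in> P"
  let ?h = "hat1 n zero one (support n (phis x) u)"
  have "f x = p (phis x)" "f ?h = p (phis ?h)"
    using rep[rule_format, OF x] rep[rule_format, OF hat1_PiE[OF X]] .
  moreover have "support n (phis x) u = support n (phis ?h) u"
    using support_hat1[OF x, of u] by (rule sym)
  then have "u \<in> p (phis x) \<longleftrightarrow> u \<in> p (phis ?h)"
    unfolding support_eq_iff by (rule polyfun_pointwise_cong[OF p])
  ultimately show "u \<in> f x \<longleftrightarrow> u \<in> f ?h" by simp
qed

lemma p0_polyfun_setting: "p0 U n zero one f \<in> polyfun Y n"
proof (rule p0_polyfun[OF Y], intro allI impI)
  fix I :: "nat set"
  show "f (hat1 n zero one I) \<in> Y" using f_into hat1_PiE[OF X] by blast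
qed

end

theorem mainTheorem7:
  fixes U :: "'u set" and Y :: "'u set set" and n :: nat
    and X :: "nat \<Rightarrow> 'x set" and zero one :: "nat \<Rightarrow> 'x"
    and f :: "(nat \<Rightarrow> 'x) \<Rightarrow> 'u set" and \<phi> :: "nat \<Rightarrow> 'x \<Rightarrow> 'u set"
  assumes Y: "set_lattice U Y"
    and X: "\<forall>i\<in>{1..n}. zero i \<in> X i \<and> one i \<in> X i \<and> zero i \<noteq> one i"
    and f_into: "\<forall>x\<in>PiE {1..n} X. f x \<in> Y"
    and f_BC: "BC n X zero one f"
    and phi_into: "\<forall>k\<in>{1..n}. \<forall>a\<in>X k. \<phi> k a \<in> Y"
    and phi_bc: "\<forall>k\<in>{1..n}. \<forall>a\<in>X k. \<phi> k (zero k) \<subseteq> \<phi> k a \<and> \<phi> k a \<subseteq> \<phi> k (one k)"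
  shows "((\<forall>k\<in>{1..n}. \<forall>a\<in>X k.
              Phi_minus U Y n X zero f k a \<subseteq> \<phi> k a \<and> \<phi> k a \<subseteq> Phi_plus U Y n X one f k a)
          \<longleftrightarrow> (\<forall>x\<in>PiE {1..n} X. f x = p0 U n zero one f (\<lambda>i. \<phi> i (x i))))
       \<and> ((\<forall>x\<in>PiE {1..n} X. f x = p0 U n zero one f (\<lambda>i. \<phi> i (x i)))
          \<longleftrightarrow> (\<exists>p\<in>polyfun Y n. \<forall>x\<in>PiE {1..n} X. f x = p (\<lambda>i. \<phi> i (x i))))"
proof -
  interpret representation_setting U Y n X zero one f \<phi>
    by unfold_locales (use assms in auto)
  have i_local: "(\<forall>k\<in>{1..n}. \<forall>a\<in>X k.
      Phi_minus U Y n X zero f k a \<subseteq> \<phi> k a \<and> \<phi> k a \<subseteq> Phi_plus U Y n X one f k a)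
    \<longleftrightarrow> locally_determined"
    by (rule bounds_iff_locally_determined)
  have local_support: "locally_determined \<longleftrightarrow> support_determined"
    using locally_imp_support_determined support_imp_locally_determined by blast
  have support_ii: "support_determined \<longleftrightarrow> (\<forall>x\<in>P. f x = p0 U n zero one f (phis x))"
    by (rule support_determined_iff_p0)
  have ii_iii: "(\<forall>x\<in>P. f x = p0 U n zero one f (phis x))
      \<longleftrightarrow> (\<exists>p\<in>polyfun Y n. \<forall>x\<in>P. f x = p (phis x))"
  proof
    assume "\<forall>x\<in>P. f x = p0 U n zero one f (phis x)"
    with p0_polyfun_setting show "\<exists>p\<in>polyfun Y n. \<forall>x\<in>P. f x = p (phis x)" by blast
  next
    assume "\<exists>p\<in>polyfun Y n. \<forall>x\<in>P. f x = p (phis x)"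
    then show "\<forall>x\<in>P. f x = p0 U n zero one f (phis x)"
      using polyfun_imp_support_determined support_ii by blast
  qed
  show ?thesis by (simp only: i_local local_support support_ii ii_iii)
qed

end
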